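(* Let $\ell$ be a positive integer, let $G$ be a graph, let $P$ be a path in $G$ with endvertices $u,v$, and let $(Q_1,\ldots,Q_r)$ be a tuple of $P$-paths in $G$, where $u_i,v_i$ denote the endvertices of $Q_i$ with $u_i<_Pv_i$, such that: (E1$'$) if $|i-j|>1$ then $Q_i$ and $Q_j$ are internally disjoint; (E2) the cycle $u_iPv_i\cup Q_i$ is short for every $i$; (E3) $u_1=u$ and $v_r=v$; (E4) $u_i<_Pu_{i+1}<_Pv_i<_Pv_{i+1}$ for $i=1,\ldots,r-1$. If every long cycle in $G$ has length at least $2\ell$, then there is a short path between $u$ and $v$ that is contained in $P\cup\bigcup_{j=1}^{r}Q_j$.
   Context: A path or cycle is short if its length (number of edges) is less than $\ell$; a cycle is long if its length is at least $\ell$. For a path $P$ with endvertices $u,v$, $\le_P$ denotes the total order on $V(P)$ given by distance from $u$ along $P$, and $xPy$ denotes the subpath of $P$ between $x,y\in V(P)$. For a subgraph $H$, an $H$-path is a path with two distinct endvertices in $H$ that is internally disjoint from $H$; a path of length $1$ between two vertices of $H$ is an $H$-path only if its edge is not in $E(H)$. *)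

theory Defs
  imports Main
begin

definition graph :: "'a set \<Rightarrow> 'a set set \<Rightarrow> bool" where
  "graph V E \<longleftrightarrow> (\<forall>e\<in>E. e \<subseteq> V \<and> card e = 2)"

definition is_path :: "'a set \<Rightarrow> 'a set set \<Rightarrow> 'a list \<Rightarrow> bool" where
  "is_path V E xs \<longleftrightarrow> xs \<noteq> [] \<and> distinct xs \<and> set xs \<subseteq> V \<and>
     (\<forall>i. Suc i < length xs \<longrightarrow> {xs ! i, xs ! Suc i} \<in> E)"

definition path_edges :: "'a list \<Rightarrow> 'a set set" where
  "path_edges xs = {{xs ! i, xs ! Suc i} | i. Suc i < length xs}"

definition plen :: "'a list \<Rightarrow> nat" where
  "plen xs = length xs - 1"

definition inner :: "'a list \<Rightarrow> 'a set" where
  "inner xs = set (butlast (tl xs))"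

text \<open>Cycles: lists of at least 3 distinct vertices, consecutive ones (cyclically) adjacent;
  the length of the cycle is the number of its vertices (= number of edges).\<close>
definition is_cycle :: "'a set \<Rightarrow> 'a set set \<Rightarrow> 'a list \<Rightarrow> bool" where
  "is_cycle V E xs \<longleftrightarrow> 3 \<le> length xs \<and> distinct xs \<and> set xs \<subseteq> V \<and>
     (\<forall>i. Suc i < length xs \<longrightarrow> {xs ! i, xs ! Suc i} \<in> E) \<and> {last xs, hd xs} \<in> E"

definition is_Hpath :: "'a set \<Rightarrow> 'a set set \<Rightarrow> 'a set \<Rightarrow> 'a set set \<Rightarrow> 'a list \<Rightarrow> bool" where
  "is_Hpath V E VH EH xs \<longleftrightarrow> is_path V E xs \<and> 2 \<le> length xs \<and>
     hd xs \<in> VH \<and> last xs \<in> VH \<and> hd xs \<noteq> last xs \<and> inner xs \<inter> VH = {} \<and>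
     (length xs = 2 \<longrightarrow> {hd xs, last xs} \<notin> EH)"

definition pos :: "'a list \<Rightarrow> 'a \<Rightarrow> nat" where
  "pos P x = (LEAST i. i < length P \<and> P ! i = x)"

definition lessP :: "'a list \<Rightarrow> 'a \<Rightarrow> 'a \<Rightarrow> bool" where
  "lessP P x y \<longleftrightarrow> pos P x < pos P y"

definition firstP :: "'a list \<Rightarrow> 'a list \<Rightarrow> 'a" where
  "firstP P Q = (if lessP P (hd Q) (last Q) then hd Q else last Q)"

definition secondP :: "'a list \<Rightarrow> 'a list \<Rightarrow> 'a" where
  "secondP P Q = (if lessP P (hd Q) (last Q) then last Q else hd Q)"

definition int_disjoint :: "'a list \<Rightarrow> 'a list \<Rightarrow> bool" where
  "int_disjoint Q R \<longleftrightarrow> inner Q \<inter> set R = {} \<and> inner R \<inter> set Q = {}"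

end

theory Submission
  imports Defs
begin

text \<open>
  Write \<open>H\<close> for \<open>P \<union> Q\<^sub>1 \<union> \<dots> \<union> Q\<^sub>r\<close> and \<open>C\<^sub>k\<close> for the short cycle
  \<open>u\<^sub>kPv\<^sub>k \<union> Q\<^sub>k\<close>. By induction on \<open>k\<close> there are two internally disjoint
  \<open>u\<close>--\<open>v\<^sub>k\<close> paths in \<open>H\<close> of total length less than \<open>\<ell>\<close> whose union contains the
  predecessor of \<open>v\<^sub>k\<close> on \<open>P\<close>; for \<open>k = 1\<close> take \<open>u\<^sub>1Pv\<^sub>1\<close> and \<open>Q\<^sub>1\<close>.
  By (E4) the cycle \<open>C\<^sub>k\<^sub>+\<^sub>1\<close> avoids \<open>u\<close> but contains \<open>v\<^sub>k\<close> and its predecessor.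
  Follow each of the two paths from \<open>u\<close> to its first vertex on \<open>C\<^sub>k\<^sub>+\<^sub>1\<close>; these
  first vertices differ, because the predecessor of \<open>v\<^sub>k\<close> lies on \<open>C\<^sub>k\<^sub>+\<^sub>1\<close> and on
  one of the paths before \<open>v\<^sub>k\<close>. Continue along the two disjoint arcs of
  \<open>C\<^sub>k\<^sub>+\<^sub>1\<close> to \<open>v\<^sub>k\<^sub>+\<^sub>1\<close>. The resulting two paths close a cycle of length less
  than \<open>2\<ell>\<close>, which is therefore short. For \<open>k = r\<close> either path is the required
  short \<open>u\<close>--\<open>v\<close> path.
\<close>

section \<open>Paths and their edges\<close>

lemma path_edges_Nil [simp]: "path_edges [] = {}"
  by (simp add: path_edges_def)

lemma path_edges_singleton [simp]: "path_edges [x] = {}"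
  by (simp add: path_edges_def)

lemma path_edges_Cons_Cons [simp]:
  "path_edges (x # y # xs) = insert {x, y} (path_edges (y # xs))"
  unfolding path_edges_def
proof (intro set_eqI iffI)
  fix e assume "e \<in> {{(x # y # xs) ! i, (x # y # xs) ! Suc i} | i. Suc i < length (x # y # xs)}"
  then show "e \<in> insert {x, y} {{(y # xs) ! i, (y # xs) ! Suc i} | i. Suc i < length (y # xs)}"
    by (auto simp: less_Suc_eq_0_disj)
qed (auto intro: exI[of _ 0] exI[of _ "Suc i" for i])

lemma path_edges_append:
  "path_edges (xs @ ys) =
     path_edges xs \<union> path_edges ys \<union> (if xs \<noteq> [] \<and> ys \<noteq> [] then {{last xs, hd ys}} else {})"
  by (induction xs rule: induct_list012) (cases ys; auto)+

lemma path_edges_rev [simp]: "path_edges (rev xs) = path_edges xs"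
  by (induction xs rule: induct_list012) (auto simp: path_edges_append insert_commute)

lemma path_edges_take_subset: "path_edges (take n xs) \<subseteq> path_edges xs"
  by (metis append_take_drop_id path_edges_append Un_assoc Un_upper1)

lemma path_edges_drop_subset: "path_edges (drop n xs) \<subseteq> path_edges xs"
  by (metis append_take_drop_id path_edges_append sup.cobounded2 sup.coboundedI1)

lemma is_path_iff:
  "is_path V E xs \<longleftrightarrow> xs \<noteq> [] \<and> distinct xs \<and> set xs \<subseteq> V \<and> path_edges xs \<subseteq> E"
  unfolding is_path_def path_edges_def by blast

lemma plen_rev [simp]: "plen (rev xs) = plen xs"
  by (simp add: plen_def)

lemma is_path_rev [simp]: "is_path V E (rev xs) \<longleftrightarrow> is_path V E xs"
  by (simp add: is_path_iff)

lemma is_path_take: "is_path V E xs \<Longrightarrow> 0 < n \<Longrightarrow> is_path V E (take n xs)"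
  using path_edges_take_subset[of n xs] by (auto simp: is_path_iff dest: in_set_takeD)

lemma is_path_drop: "is_path V E xs \<Longrightarrow> n < length xs \<Longrightarrow> is_path V E (drop n xs)"
  using path_edges_drop_subset[of n xs] by (auto simp: is_path_iff dest: in_set_dropD)

lemma is_path_append:
  assumes "is_path V E xs" "is_path V E ys" "set xs \<inter> set ys = {}" "{last xs, hd ys} \<in> E"
  shows "is_path V E (xs @ ys)"
  using assms by (auto simp: is_path_iff path_edges_append)

definition cycle_edges :: "'a list \<Rightarrow> 'a set set" where
  "cycle_edges C = insert {last C, hd C} (path_edges C)"

lemma is_cycle_iff:
  "is_cycle V E C \<longleftrightarrow> 3 \<le> length C \<and> distinct C \<and> set C \<subseteq> V \<and> cycle_edges C \<subseteq> E"
  unfolding is_cycle_def cycle_edges_def path_edges_def by blast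

section \<open>Closing two paths into a cycle\<close>

definition internally_disjoint_paths ::
    "'a set \<Rightarrow> 'a set set \<Rightarrow> 'a \<Rightarrow> 'a \<Rightarrow> 'a list \<Rightarrow> 'a list \<Rightarrow> bool" where
  "internally_disjoint_paths V E u w A B \<longleftrightarrow> is_path V E A \<and> is_path V E B \<and>
     hd A = u \<and> hd B = u \<and> last A = w \<and> last B = w \<and> set A \<inter> set B = {u, w}"

lemma internally_disjoint_paths_rev:
  "internally_disjoint_paths V E u w A B \<Longrightarrow> internally_disjoint_paths V E w u (rev A) (rev B)"
  by (auto simp: internally_disjoint_paths_def hd_rev last_rev)

lemma internally_disjoint_paths_two_le_length:
  assumes "internally_disjoint_paths V E u w A B" "u \<noteq> w"
  shows "2 \<le> length A" "2 \<le> length B"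
  using assms by (auto simp: internally_disjoint_paths_def is_path_iff Suc_le_eq length_Suc_conv
      neq_Nil_conv split: if_splits)

lemma internally_disjoint_paths_split:
  assumes "internally_disjoint_paths V E u w A B" "u \<noteq> w"
  obtains A1 B1 where "A = A1 @ [w]" "A1 \<noteq> []" "hd A1 = u" "B = u # B1" "B1 \<noteq> []" "last B1 = w"
proof -
  have A2: "2 \<le> length A" and B2: "2 \<le> length B"
    using internally_disjoint_paths_two_le_length[OF assms] by auto
  have ends: "hd A = u" "last A = w" "hd B = u" "last B = w"
    using assms(1) by (auto simp: internally_disjoint_paths_def)
  obtain A1 where A: "A = A1 @ [w]"
    using A2 ends(2) by (cases A rule: rev_cases) auto
  obtain B1 where B: "B = u # B1"
    using B2 ends(3) by (cases B) auto
  show thesis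
    by (rule that[OF A _ _ B]) (use A B A2 B2 ends in \<open>auto simp: hd_append split: if_splits\<close>)
qed

definition join_cycle :: "'a list \<Rightarrow> 'a list \<Rightarrow> 'a list" where
  "join_cycle A B = butlast A @ rev (tl B)"

lemma length_join_cycle [simp]: "length (join_cycle A B) = plen A + plen B"
  by (simp add: join_cycle_def plen_def)

lemma
  assumes "internally_disjoint_paths V E u w A B" "u \<noteq> w"
  shows hd_join_cycle: "hd (join_cycle A B) = u"
    and nth_one_join_cycle: "join_cycle A B ! 1 = A ! 1"
    and set_join_cycle: "set (join_cycle A B) = set A \<union> set B"
    and cycle_edges_join_cycle: "cycle_edges (join_cycle A B) \<subseteq> path_edges A \<union> path_edges B"
    and distinct_join_cycle: "distinct (join_cycle A B)"
proof -
  have dA: "distinct A" and dB: "distinct B" and AB: "set A \<inter> set B = {u, w}"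
    using assms(1) by (auto simp: internally_disjoint_paths_def is_path_iff)
  obtain A1 B1 where A: "A = A1 @ [w]" "A1 \<noteq> []" "hd A1 = u"
    and B: "B = u # B1" "B1 \<noteq> []" "last B1 = w"
    by (rule internally_disjoint_paths_split[OF assms])
  have J: "join_cycle A B = A1 @ rev B1"
    by (simp add: join_cycle_def A(1) B(1))
  show "hd (join_cycle A B) = u"
    using A unfolding J by simp
  show "join_cycle A B ! 1 = A ! 1"
  proof (cases "2 \<le> length A1")
    case True
    then show ?thesis
      unfolding J by (simp add: A(1) nth_append)
  next
    case False
    with A(2) have "length A1 = 1"
      by (cases A1) (auto simp: Suc_le_eq)
    with B(2,3) show ?thesis
      unfolding J by (simp add: A(1) nth_append hd_rev[symmetric] hd_conv_nth)
  qed
  have "u \<in> set A1" "w \<in> set B1"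
    using A B by auto
  then show "set (join_cycle A B) = set A \<union> set B"
    unfolding J by (auto simp: A(1) B(1))
  show "distinct (join_cycle A B)"
    using dA dB AB unfolding J by (auto simp: A(1) B(1))
  have "path_edges A = insert {last A1, w} (path_edges A1)"
    "path_edges B = insert {u, hd B1} (path_edges B1)"
    using A B by (auto simp: path_edges_append neq_Nil_conv)
  then show "cycle_edges (join_cycle A B) \<subseteq> path_edges A \<union> path_edges B"
    using A(2,3) B(2,3) unfolding J
    by (auto simp: cycle_edges_def path_edges_append hd_rev last_rev insert_commute)
qed

lemma is_cycle_join_cycle:
  assumes "internally_disjoint_paths V E u w A B" "u \<noteq> w" "3 \<le> plen A + plen B"
  shows "is_cycle V E (join_cycle A B)"
proof -
  have "set A \<union> set B \<subseteq> V" "path_edges A \<union> path_edges B \<subseteq> E"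
    using assms(1) by (auto simp: internally_disjoint_paths_def is_path_iff)
  then show ?thesis
    using assms set_join_cycle[OF assms(1,2)] cycle_edges_join_cycle[OF assms(1,2)]
      distinct_join_cycle[OF assms(1,2)]
    by (simp add: is_cycle_iff) blast
qed

lemma internally_disjoint_paths_short:
  assumes long: "\<forall>C. is_cycle V E C \<and> l \<le> length C \<longrightarrow> 2 * l \<le> length C"
    and "internally_disjoint_paths V E u w A B" "u \<noteq> w" "3 \<le> plen A + plen B"
    and "plen A + plen B < 2 * l"
  shows "plen A + plen B < l"
  using long is_cycle_join_cycle[OF assms(2-4)] assms(5) by (auto simp: not_less[symmetric])

section \<open>Rerouting through a short cycle\<close>

lemma nth_mem_take: "k < n \<Longrightarrow> k < length xs \<Longrightarrow> xs ! k \<in> set (take n xs)"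
  by (simp add: in_set_conv_nth) (metis nth_take)

lemma hd_rev_take: "k < length xs \<Longrightarrow> hd (rev (take (Suc k) xs)) = xs ! k"
  by (simp add: hd_rev take_Suc_conv_app_nth)

lemma last_rev_take: "k < length xs \<Longrightarrow> last (rev (take (Suc k) xs)) = hd xs"
  by (auto simp: last_rev)

lemma cycle_arcs_to_hd_nth:
  assumes C: "is_cycle V E M" and ij: "i < j" "j < length M"
  obtains X Y where "is_path V E X" "is_path V E Y" "hd X = M ! i" "hd Y = M ! j"
    "last X = hd M" "last Y = hd M" "set X \<inter> set Y = {hd M}" "M ! 1 \<in> set X \<union> set Y"
    "plen X + plen Y < length M" "set X \<union> set Y \<subseteq> set M"
    "path_edges X \<union> path_edges Y \<subseteq> cycle_edges M"
proof -
  have M: "is_path V E M" "{last M, hd M} \<in> E" "distinct M"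
    using C by (auto simp: is_cycle_iff is_path_iff cycle_edges_def)
  have M_ne: "M \<noteq> []"
    using ij by auto
  then have hd_M: "hd M = M ! 0"
    by (simp add: hd_conv_nth)
  note arc_back = is_path_take[OF M(1), of "Suc k" for k] hd_rev_take[of _ M] last_rev_take[of _ M]
  show thesis
  proof (cases "i = 0")
    case True
    \<comment> \<open>the arc from \<open>M ! i\<close> is trivial, so the arc from \<open>M ! j\<close> must run through \<open>M ! 1\<close>\<close>
    show thesis
    proof (rule that[of "[hd M]" "rev (take (Suc j) M)"])
      show "is_path V E [hd M]"
        using M(1) by (auto simp: is_path_iff)
      show "set [hd M] \<inter> set (rev (take (Suc j) M)) = {hd M}"
        "M ! 1 \<in> set [hd M] \<union> set (rev (take (Suc j) M))"
        using nth_mem_take[of 0 "Suc j" M] nth_mem_take[of 1 "Suc j" M] ij M_ne hd_M by auto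
      show "set [hd M] \<union> set (rev (take (Suc j) M)) \<subseteq> set M"
        using M_ne by (auto dest: in_set_takeD)
      show "path_edges [hd M] \<union> path_edges (rev (take (Suc j) M)) \<subseteq> cycle_edges M"
        using path_edges_take_subset[of "Suc j" M] by (auto simp: cycle_edges_def)
    qed (use True ij arc_back[of j] hd_M in \<open>auto simp: plen_def\<close>)
  next
    case False
    define Y where "Y = drop j M @ [hd M]"
    have disj: "set (take (Suc i) M) \<inter> set (drop j M) = {}"
      using ij M(3) by (simp add: set_take_disj_set_drop_if_distinct)
    have "hd M \<in> set (take (Suc i) M)"
      using nth_mem_take[of 0 "Suc i" M] M_ne hd_M by auto
    then have hd_Y: "hd M \<notin> set (drop j M)"
      using disj by blast
    show thesis
    proof (rule that[of "rev (take (Suc i) M)" Y])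
      show "is_path V E Y"
        unfolding Y_def using ij M hd_Y
        by (intro is_path_append is_path_drop) (auto simp: is_path_iff)
      show "set (rev (take (Suc i) M)) \<inter> set Y = {hd M}"
        unfolding Y_def using disj \<open>hd M \<in> set (take (Suc i) M)\<close> by auto
      show "M ! 1 \<in> set (rev (take (Suc i) M)) \<union> set Y"
        using nth_mem_take[of 1 "Suc i" M] False ij by auto
      show "set (rev (take (Suc i) M)) \<union> set Y \<subseteq> set M"
        unfolding Y_def using M_ne by (auto dest: in_set_takeD in_set_dropD)
      show "path_edges (rev (take (Suc i) M)) \<union> path_edges Y \<subseteq> cycle_edges M"
        unfolding Y_def using ij path_edges_take_subset[of "Suc i" M] path_edges_drop_subset[of j M]
        by (auto simp: cycle_edges_def path_edges_append)
    qed (use ij arc_back[of i] in \<open>auto simp: Y_def plen_def hd_drop_conv_nth\<close>)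
  qed
qed

lemma cycle_arcs_to_hd:
  assumes C: "is_cycle V E M" and xy: "x \<in> set M" "y \<in> set M" "x \<noteq> y"
  obtains X Y where "is_path V E X" "is_path V E Y" "hd X = x" "hd Y = y"
    "last X = hd M" "last Y = hd M" "set X \<inter> set Y = {hd M}" "M ! 1 \<in> set X \<union> set Y"
    "plen X + plen Y < length M" "set X \<union> set Y \<subseteq> set M"
    "path_edges X \<union> path_edges Y \<subseteq> cycle_edges M"
proof -
  obtain i j where ij: "i < length M" "M ! i = x" "j < length M" "M ! j = y"
    using xy by (auto simp: in_set_conv_nth)
  with xy(3) consider "i < j" | "j < i"
    by (metis linorder_neqE_nat)
  then show thesis
  proof cases
    case 1
    show thesis
      by (rule cycle_arcs_to_hd_nth[OF C 1 ij(3)], rule that) (use ij in auto)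
  next
    case 2
    show thesis
      by (rule cycle_arcs_to_hd_nth[OF C 2 ij(1)])
        (metis that ij(2,4) Int_commute Un_commute add.commute)
  qed
qed

lemma first_hit:
  assumes "z \<in> set xs" "z \<in> T"
  obtains i where "i < length xs" "xs ! i \<in> T" "set (take i xs) \<inter> T = {}"
proof
  let ?i = "length (takeWhile (\<lambda>x. x \<notin> T) xs)"
  have "takeWhile (\<lambda>x. x \<notin> T) xs \<noteq> xs"
    using assms by auto
  then show "?i < length xs"
    by (metis length_takeWhile_le nat_less_le take_all takeWhile_eq_take)
  then show "xs ! ?i \<in> T"
    using nth_length_takeWhile by blast
  show "set (take ?i xs) \<inter> T = {}"
    by (auto simp: takeWhile_eq_take[symmetric] dest: set_takeWhileD)
qed

lemma first_hits_differ:
  assumes AB: "internally_disjoint_paths V E u w A B" and "u \<notin> T"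
    and i: "i < length A" "A ! i \<in> T" "set (take i A) \<inter> T = {}"
    and j: "j < length B" "set (take j B) \<inter> T = {}"
    and q: "q \<in> set A \<union> set B" "q \<in> T" "q \<noteq> w"
  shows "A ! i \<noteq> B ! j"
proof
  assume eq: "A ! i = B ! j"
  have miss: "q \<notin> set C"
    if "is_path V E C" "last C = w" "k < length C" "C ! k = w" "set (take k C) \<inter> T = {}" for C k
  proof
    assume "q \<in> set C"
    have "C \<noteq> []" "distinct C"
      using that(1) by (auto simp: is_path_iff)
    then have "k = length C - 1"
      using that(2-4) nth_eq_iff_index_eq[of C k "length C - 1"] by (simp add: last_conv_nth)
    then have "take k C = butlast C"
      by (simp add: butlast_conv_take)
    moreover have "q \<in> set (butlast C @ [last C])"
      using \<open>q \<in> set C\<close> \<open>C \<noteq> []\<close> by simp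
    ultimately show False
      using that(2,5) q(2,3) by auto
  qed
  have "A ! i \<in> set A \<inter> set B"
    using eq i(1) j(1) by (metis IntI nth_mem)
  then have "A ! i = w"
    using AB i(2) \<open>u \<notin> T\<close> unfolding internally_disjoint_paths_def by force
  have "q \<notin> set A"
    by (rule miss[of A i]) (use AB i \<open>A ! i = w\<close> in \<open>auto simp: internally_disjoint_paths_def\<close>)
  moreover have "q \<notin> set B"
    by (rule miss[of B j]) (use AB j eq \<open>A ! i = w\<close> in \<open>auto simp: internally_disjoint_paths_def\<close>)
  ultimately show False
    using q(1) by blast
qed

lemma
  assumes A: "is_path V E A" and i: "0 < i" "i < length A"
    and X: "is_path V E X" "hd X = A ! i" and disj: "set (take i A) \<inter> set X = {}"
  shows is_path_take_append: "is_path V E (take i A @ X)"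
    and path_edges_take_append: "path_edges (take i A @ X) \<subseteq> path_edges A \<union> path_edges X"
    and plen_take_append: "plen (take i A @ X) = i + plen X"
proof -
  have ne: "take i A \<noteq> []" "X \<noteq> []"
    using i X by (auto simp: is_path_iff)
  have "path_edges (take i A @ [A ! i]) \<subseteq> path_edges A"
    using i path_edges_take_subset[of "Suc i" A] by (simp add: take_Suc_conv_app_nth)
  then have link: "{last (take i A), hd X} \<in> path_edges A"
    using ne X(2) by (auto simp: path_edges_append)
  then show "path_edges (take i A @ X) \<subseteq> path_edges A \<union> path_edges X"
    using path_edges_take_subset[of i A] by (auto simp: path_edges_append)
  show "is_path V E (take i A @ X)"
    using A i X disj link by (intro is_path_append is_path_take) (auto simp: is_path_iff)
  show "plen (take i A @ X) = i + plen X"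
    using i(2) ne(2) by (cases X) (simp_all add: plen_def)
qed

lemma reroute_internally_disjoint:
  assumes AB: "internally_disjoint_paths V E u w A B" and "w \<in> T"
    and i: "0 < i" "i < length A" "set (take i A) \<inter> T = {}"
    and j: "0 < j" "j < length B" "set (take j B) \<inter> T = {}"
    and XY: "is_path V E X" "is_path V E Y" "hd X = A ! i" "hd Y = B ! j"
      "last X = c" "last Y = c" "set X \<inter> set Y = {c}" "set X \<union> set Y \<subseteq> T"
  shows "internally_disjoint_paths V E u c (take i A @ X) (take j B @ Y)"
proof -
  have A: "is_path V E A" "hd A = u" and B: "is_path V E B" "hd B = u"
    and "set A \<inter> set B = {u, w}"
    using AB by (auto simp: internally_disjoint_paths_def)
  then have "set (take i A) \<inter> set (take j B) \<subseteq> {u}"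
    using i(3) \<open>w \<in> T\<close> by (auto dest: in_set_takeD)
  moreover have "u \<in> set (take i A)" "u \<in> set (take j B)"
    using A B i j hd_in_set[of "take i A"] hd_in_set[of "take j B"] by (auto simp: is_path_iff)
  moreover have "c \<in> set X" "c \<in> set Y"
    using XY by (auto simp: is_path_iff)
  ultimately have "set (take i A @ X) \<inter> set (take j B @ Y) = {u, c}"
    using i(3) j(3) XY(7,8) by auto
  moreover have "is_path V E (take i A @ X)" "is_path V E (take j B @ Y)"
    using i j XY by (auto intro!: is_path_take_append A B)
  ultimately show ?thesis
    using A B XY(1,2,5,6) i j unfolding internally_disjoint_paths_def by (auto simp: is_path_iff)
qed

lemma internally_disjoint_paths_three_le_plen:
  assumes AB: "internally_disjoint_paths V E u w A B" "u \<noteq> w"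
    and z: "z \<in> set A \<union> set B" "z \<notin> {u, w}"
  shows "3 \<le> plen A + plen B"
proof (rule ccontr)
  assume "\<not> 3 \<le> plen A + plen B"
  with internally_disjoint_paths_two_le_length[OF AB] have "length A = 2" "length B = 2"
    by (auto simp: plen_def)
  then have "set A = {hd A, last A}" "set B = {hd B, last B}"
    by (auto simp: numeral_2_eq_2 length_Suc_conv)
  with AB z show False
    by (auto simp: internally_disjoint_paths_def)
qed

lemma add_less_plen_if_nth_ne:
  assumes "i < length A" "j < length B" "last A = last B" "A ! i \<noteq> B ! j"
  shows "i + j < plen A + plen B"
proof -
  have "A \<noteq> []" "B \<noteq> []"
    using assms(1,2) by auto
  then have "\<not> (i = plen A \<and> j = plen B)"
    using assms(3,4) by (auto simp: plen_def last_conv_nth)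
  moreover have "i \<le> plen A" "j \<le> plen B"
    using assms(1,2) by (auto simp: plen_def)
  ultimately show ?thesis
    by linarith
qed

lemma is_cycle_nth_one:
  assumes "is_cycle V E M"
  shows "M ! 1 \<in> set M" "M ! 1 \<noteq> hd M" "hd M \<in> set M"
proof -
  have "3 \<le> length M" "distinct M"
    using assms by (auto simp: is_cycle_iff)
  moreover from this have "M \<noteq> []"
    by auto
  ultimately show "M ! 1 \<in> set M" "M ! 1 \<noteq> hd M" "hd M \<in> set M"
    using nth_eq_iff_index_eq[of M 1 0] by (auto simp: hd_conv_nth)
qed

lemma distinct_first_hits:
  assumes AB: "internally_disjoint_paths V E u w A B" "q \<in> set A \<union> set B"
    and T: "u \<notin> T" "w \<in> T" "q \<in> T" "q \<noteq> w"
  obtains i j where "0 < i" "i < length A" "A ! i \<in> T" "set (take i A) \<inter> T = {}"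
    "0 < j" "j < length B" "B ! j \<in> T" "set (take j B) \<inter> T = {}" "A ! i \<noteq> B ! j"
proof -
  have A: "is_path V E A" "hd A = u" "last A = w" and B: "is_path V E B" "hd B = u" "last B = w"
    using AB(1) by (auto simp: internally_disjoint_paths_def)
  then have "w \<in> set A" "w \<in> set B"
    using last_in_set[of A] last_in_set[of B] by (auto simp: is_path_iff)
  obtain i where i: "i < length A" "A ! i \<in> T" "set (take i A) \<inter> T = {}"
    using \<open>w \<in> set A\<close> T(2) by (rule first_hit)
  obtain j where j: "j < length B" "B ! j \<in> T" "set (take j B) \<inter> T = {}"
    using \<open>w \<in> set B\<close> T(2) by (rule first_hit)
  have "0 < i" "0 < j"
    using A B i(2) j(2) T(1) by (auto simp: is_path_iff hd_conv_nth intro!: gr0I)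
  with i j show thesis
    using that first_hits_differ[OF AB(1) T(1) i j(1,3) AB(2) T(3,4)] by blast
qed

lemma reroute_through_cycle:
  assumes AB: "internally_disjoint_paths V E u w A B" "q \<in> set A \<union> set B"
    and M: "is_cycle V E M" "u \<notin> set M" "w \<in> set M" "q \<in> set M" "q \<noteq> w"
  obtains A' B' where "internally_disjoint_paths V E u (hd M) A' B'" "M ! 1 \<in> set A' \<union> set B'"
    "plen A' + plen B' + 2 \<le> plen A + plen B + length M"
    "set A' \<union> set B' \<subseteq> set A \<union> set B \<union> set M"
    "path_edges A' \<union> path_edges B' \<subseteq> path_edges A \<union> path_edges B \<union> cycle_edges M"
proof -
  obtain i j where i: "0 < i" "i < length A" "A ! i \<in> set M" "set (take i A) \<inter> set M = {}"
    and j: "0 < j" "j < length B" "B ! j \<in> set M" "set (take j B) \<inter> set M = {}"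
    and xy: "A ! i \<noteq> B ! j"
    by (rule distinct_first_hits[OF AB M(2-5)])
  obtain X Y where XY: "is_path V E X" "is_path V E Y" "hd X = A ! i" "hd Y = B ! j"
    "last X = hd M" "last Y = hd M" "set X \<inter> set Y = {hd M}" "M ! 1 \<in> set X \<union> set Y"
    "plen X + plen Y < length M" "set X \<union> set Y \<subseteq> set M"
    "path_edges X \<union> path_edges Y \<subseteq> cycle_edges M"
    by (rule cycle_arcs_to_hd[OF M(1) i(3) j(3) xy])
  have A: "is_path V E A" "last A = w" and B: "is_path V E B" "last B = w"
    using AB(1) by (auto simp: internally_disjoint_paths_def)
  have disj: "set (take i A) \<inter> set X = {}" "set (take j B) \<inter> set Y = {}"
    using i(4) j(4) XY(10) by auto
  note A' = plen_take_append[OF A(1) i(1,2) XY(1,3) disj(1)]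
    path_edges_take_append[OF A(1) i(1,2) XY(1,3) disj(1)]
  note B' = plen_take_append[OF B(1) j(1,2) XY(2,4) disj(2)]
    path_edges_take_append[OF B(1) j(1,2) XY(2,4) disj(2)]
  have "i + j < plen A + plen B"
    using add_less_plen_if_nth_ne[OF i(2) j(2) _ xy] A(2) B(2) by simp
  show thesis
  proof (rule that[of "take i A @ X" "take j B @ Y"])
    show "internally_disjoint_paths V E u (hd M) (take i A @ X) (take j B @ Y)"
      by (rule reroute_internally_disjoint[OF AB(1) M(3) i(1,2,4) j(1,2,4) XY(1-7,10)])
    show "M ! 1 \<in> set (take i A @ X) \<union> set (take j B @ Y)"
      using XY(8) by auto
    show "plen (take i A @ X) + plen (take j B @ Y) + 2 \<le> plen A + plen B + length M"
      using \<open>i + j < plen A + plen B\<close> XY(9) A'(1) B'(1) by linarith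
    show "set (take i A @ X) \<union> set (take j B @ Y) \<subseteq> set A \<union> set B \<union> set M"
      using XY(10) by (auto dest: in_set_takeD)
    show "path_edges (take i A @ X) \<union> path_edges (take j B @ Y)
        \<subseteq> path_edges A \<union> path_edges B \<union> cycle_edges M"
      using XY(11) A'(2) B'(2) by blast
  qed
qed

definition short_cycle_through ::
    "'a set \<Rightarrow> 'a set set \<Rightarrow> nat \<Rightarrow> 'a set \<Rightarrow> 'a set set \<Rightarrow> 'a \<Rightarrow> 'a \<Rightarrow> 'a \<Rightarrow> bool" where
  "short_cycle_through V E l VH EH u w q \<longleftrightarrow> (\<exists>A B. internally_disjoint_paths V E u w A B \<and>
     q \<in> set A \<union> set B \<and> plen A + plen B < l \<and>
     set A \<union> set B \<subseteq> VH \<and> path_edges A \<union> path_edges B \<subseteq> EH)"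

lemma short_cycle_through_step:
  assumes long: "\<forall>C. is_cycle V E C \<and> l \<le> length C \<longrightarrow> 2 * l \<le> length C"
    and "short_cycle_through V E l VH EH u w q"
    and M: "is_cycle V E M" "length M < l" "set M \<subseteq> VH" "cycle_edges M \<subseteq> EH"
    and uwq: "u \<notin> set M" "w \<in> set M" "q \<in> set M" "q \<noteq> w"
  shows "short_cycle_through V E l VH EH u (hd M) (M ! 1)"
proof -
  obtain A B where AB: "internally_disjoint_paths V E u w A B" "q \<in> set A \<union> set B"
    "plen A + plen B < l" "set A \<union> set B \<subseteq> VH" "path_edges A \<union> path_edges B \<subseteq> EH"
    using assms(2) by (auto simp: short_cycle_through_def)
  obtain A' B' where new: "internally_disjoint_paths V E u (hd M) A' B'" "M ! 1 \<in> set A' \<union> set B'"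
    "plen A' + plen B' + 2 \<le> plen A + plen B + length M"
    "set A' \<union> set B' \<subseteq> set A \<union> set B \<union> set M"
    "path_edges A' \<union> path_edges B' \<subseteq> path_edges A \<union> path_edges B \<union> cycle_edges M"
    by (rule reroute_through_cycle[OF AB(1,2) M(1) uwq])
  have "u \<noteq> hd M" "M ! 1 \<notin> {u, hd M}"
    using is_cycle_nth_one[OF M(1)] uwq(1) by auto
  then have "3 \<le> plen A' + plen B'"
    using internally_disjoint_paths_three_le_plen[OF new(1)] new(2) by blast
  moreover have "plen A' + plen B' < 2 * l"
    using new(3) AB(3) M(2) by linarith
  ultimately have "plen A' + plen B' < l"
    using internally_disjoint_paths_short[OF long new(1) \<open>u \<noteq> hd M\<close>] by blast
  with new AB(4,5) M(3,4) show ?thesis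
    unfolding short_cycle_through_def by blast
qed

lemma short_cycle_through_mono:
  "short_cycle_through V E l VH EH u w q \<Longrightarrow> VH \<subseteq> VH' \<Longrightarrow> EH \<subseteq> EH' \<Longrightarrow>
    short_cycle_through V E l VH' EH' u w q"
  unfolding short_cycle_through_def by blast

lemma short_cycle_through_chain:
  assumes long: "\<forall>C. is_cycle V E C \<and> l \<le> length C \<longrightarrow> 2 * l \<le> length C"
    and start: "short_cycle_through V E l VH EH u (hd (M 1)) (M 1 ! 1)"
    and cycles: "\<And>k. k \<in> {1..r} \<Longrightarrow>
      is_cycle V E (M k) \<and> length (M k) < l \<and> set (M k) \<subseteq> VH \<and> cycle_edges (M k) \<subseteq> EH"
    and links: "\<And>k. k \<in> {1..<r} \<Longrightarrow>
      u \<notin> set (M (Suc k)) \<and> hd (M k) \<in> set (M (Suc k)) \<and> M k ! 1 \<in> set (M (Suc k))"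
    and "1 \<le> k" "k \<le> r"
  shows "short_cycle_through V E l VH EH u (hd (M k)) (M k ! 1)"
  using \<open>1 \<le> k\<close> \<open>k \<le> r\<close>
proof (induction k rule: nat_induct_at_least)
  case base
  show ?case
    by (rule start)
next
  case (Suc k)
  then have k: "k \<in> {1..<r}" "k \<in> {1..r}" "Suc k \<in> {1..r}"
    by auto
  have "M k ! 1 \<noteq> hd (M k)"
    using is_cycle_nth_one(2) cycles[OF k(2)] by blast
  with Suc cycles[OF k(3)] links[OF k(1)] show ?case
    by (intro short_cycle_through_step[OF long, where M = "M (Suc k)"]) simp_all
qed

section \<open>Subpaths of \<open>P\<close> and the cycles of \<open>P\<close>-paths\<close>

lemma pos_nth: "distinct P \<Longrightarrow> i < length P \<Longrightarrow> pos P (P ! i) = i"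
  unfolding pos_def by (rule Least_equality) (auto simp: nth_eq_iff_index_eq)

lemma pos_less_length_nth_pos:
  assumes "x \<in> set P"
  shows "pos P x < length P" "P ! pos P x = x"
proof -
  have "\<exists>i. i < length P \<and> P ! i = x"
    using assms by (auto simp: in_set_conv_nth)
  then show "pos P x < length P" "P ! pos P x = x"
    unfolding pos_def by (metis (mono_tags, lifting) LeastI_ex)+
qed

definition subpath :: "'a list \<Rightarrow> 'a \<Rightarrow> 'a \<Rightarrow> 'a list" where
  "subpath P x y = drop (pos P x) (take (Suc (pos P y)) P)"

lemma nth_subpath:
  assumes "y \<in> set P" "pos P x \<le> pos P y" "k \<le> pos P y - pos P x"
  shows "subpath P x y ! k = P ! (pos P x + k)"
  using assms pos_less_length_nth_pos[of y P] by (simp add: subpath_def)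

lemma
  assumes P: "is_path V E P" and xy: "x \<in> set P" "y \<in> set P" "pos P x \<le> pos P y"
  shows is_path_subpath: "is_path V E (subpath P x y)"
    and plen_subpath: "plen (subpath P x y) = pos P y - pos P x"
    and hd_subpath: "hd (subpath P x y) = x"
    and last_subpath: "last (subpath P x y) = y"
    and path_edges_subpath: "path_edges (subpath P x y) \<subseteq> path_edges P"
    and set_subpath: "z \<in> set (subpath P x y) \<longleftrightarrow> z \<in> set P \<and> pos P x \<le> pos P z \<and> pos P z \<le> pos P y"
proof -
  have y: "pos P y < length P" "P ! pos P y = y"
    by (rule pos_less_length_nth_pos[OF xy(2)])+
  have len: "length (subpath P x y) = Suc (pos P y) - pos P x"
    using y(1) by (simp add: subpath_def)
  show "is_path V E (subpath P x y)"
    unfolding subpath_def using xy(3) y(1) by (intro is_path_drop is_path_take P) auto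
  show "plen (subpath P x y) = pos P y - pos P x"
    using len xy(3) by (simp add: plen_def)
  have "0 < length (subpath P x y)"
    using len xy(3) by simp
  then have "subpath P x y \<noteq> []"
    by simp
  then show "hd (subpath P x y) = x" "last (subpath P x y) = y"
    using len xy nth_subpath[OF xy(2,3), of 0] nth_subpath[OF xy(2,3), of "pos P y - pos P x"]
      pos_less_length_nth_pos[OF xy(1)] y(2)
    by (auto simp: hd_conv_nth last_conv_nth)
  show "path_edges (subpath P x y) \<subseteq> path_edges P"
    unfolding subpath_def using path_edges_drop_subset path_edges_take_subset by (metis subset_trans)
  have "distinct P"
    using P by (simp add: is_path_iff)
  show "z \<in> set (subpath P x y) \<longleftrightarrow> z \<in> set P \<and> pos P x \<le> pos P z \<and> pos P z \<le> pos P y"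
  proof
    assume "z \<in> set (subpath P x y)"
    then obtain k where "k < Suc (pos P y) - pos P x" "z = P ! (pos P x + k)"
      using len nth_subpath[OF xy(2,3)] by (auto simp: in_set_conv_nth)
    then show "z \<in> set P \<and> pos P x \<le> pos P z \<and> pos P z \<le> pos P y"
      using y(1) pos_nth[OF \<open>distinct P\<close>, of "pos P x + k"] by auto
  next
    assume z: "z \<in> set P \<and> pos P x \<le> pos P z \<and> pos P z \<le> pos P y"
    then have "subpath P x y ! (pos P z - pos P x) = z"
      using nth_subpath[OF xy(2,3), of "pos P z - pos P x"] pos_less_length_nth_pos[of z P] by auto
    moreover have "pos P z - pos P x < length (subpath P x y)"
      using z len by linarith
    ultimately show "z \<in> set (subpath P x y)"
      by (metis nth_mem)
  qed
qed

lemma nth_one_rev_subpath: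
  assumes "y \<in> set P" "pos P x < pos P y"
  shows "rev (subpath P x y) ! 1 = P ! (pos P y - 1)"
proof -
  have "length (subpath P x y) = Suc (pos P y) - pos P x"
    using pos_less_length_nth_pos[OF assms(1)] by (simp add: subpath_def)
  then show ?thesis
    using assms nth_subpath[OF assms(1), of x "pos P y - pos P x - 1"] by (simp add: rev_nth)
qed

lemma pos_inj: "x \<in> set P \<Longrightarrow> y \<in> set P \<Longrightarrow> pos P x = pos P y \<Longrightarrow> x = y"
  by (metis pos_less_length_nth_pos(2))

definition orient_along :: "'a list \<Rightarrow> 'a list \<Rightarrow> 'a list" where
  "orient_along P Q = (if lessP P (hd Q) (last Q) then Q else rev Q)"

lemma set_eq_ends_inner:
  assumes "2 \<le> length xs"
  shows "set xs = {hd xs, last xs} \<union> inner xs"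
proof (cases xs)
  case (Cons a ys)
  with assms have "ys \<noteq> []"
    by auto
  then have "set ys = insert (last ys) (set (butlast ys))"
    by (induction ys rule: rev_induct) auto
  with Cons \<open>ys \<noteq> []\<close> show ?thesis
    by (auto simp: inner_def)
qed (use assms in simp)

lemma
  assumes "is_Hpath V E (set P) (path_edges P) Q"
  shows firstP_in_set: "firstP P Q \<in> set P"
    and secondP_in_set: "secondP P Q \<in> set P"
    and pos_firstP_less: "pos P (firstP P Q) < pos P (secondP P Q)"
    and Hpath_inter: "set Q \<inter> set P \<subseteq> {firstP P Q, secondP P Q}"
    and is_path_orient_along: "is_path V E (orient_along P Q)"
    and hd_orient_along: "hd (orient_along P Q) = firstP P Q"
    and last_orient_along: "last (orient_along P Q) = secondP P Q"
proof -
  have Q: "is_path V E Q" "2 \<le> length Q" "hd Q \<in> set P" "last Q \<in> set P" "hd Q \<noteq> last Q"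
    "inner Q \<inter> set P = {}"
    using assms by (auto simp: is_Hpath_def)
  have ends: "{firstP P Q, secondP P Q} = {hd Q, last Q}"
    by (auto simp: firstP_def secondP_def)
  show "firstP P Q \<in> set P" "secondP P Q \<in> set P"
    using Q(3,4) by (simp_all add: firstP_def secondP_def)
  have "pos P (hd Q) \<noteq> pos P (last Q)"
    using Q(3-5) pos_inj[of "hd Q" P "last Q"] by auto
  then show "pos P (firstP P Q) < pos P (secondP P Q)"
    by (auto simp: firstP_def secondP_def lessP_def)
  have "set Q = {hd Q, last Q} \<union> inner Q"
    using Q(2) by (rule set_eq_ends_inner)
  then show "set Q \<inter> set P \<subseteq> {firstP P Q, secondP P Q}"
    using Q(6) ends by auto
  show "is_path V E (orient_along P Q)"
    using Q(1) by (simp add: orient_along_def)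
  show "hd (orient_along P Q) = firstP P Q" "last (orient_along P Q) = secondP P Q"
    by (auto simp: orient_along_def firstP_def secondP_def hd_rev last_rev)
qed

lemma set_orient_along [simp]: "set (orient_along P Q) = set Q"
  and path_edges_orient_along [simp]: "path_edges (orient_along P Q) = path_edges Q"
  and length_orient_along [simp]: "length (orient_along P Q) = length Q"
  by (simp_all add: orient_along_def)

lemma internally_disjoint_paths_ear:
  assumes P: "is_path V E P" and HQ: "is_Hpath V E (set P) (path_edges P) Q"
  shows "internally_disjoint_paths V E (firstP P Q) (secondP P Q)
    (subpath P (firstP P Q) (secondP P Q)) (orient_along P Q)"
proof -
  let ?s = "firstP P Q" and ?t = "secondP P Q"
  note st = firstP_in_set[OF HQ] secondP_in_set[OF HQ] pos_firstP_less[OF HQ]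
  have S: "is_path V E (subpath P ?s ?t)" "hd (subpath P ?s ?t) = ?s" "last (subpath P ?s ?t) = ?t"
    using is_path_subpath[OF P st(1,2)] hd_subpath[OF P st(1,2)] last_subpath[OF P st(1,2)] st(3)
    by auto
  have "set (subpath P ?s ?t) \<inter> set Q \<subseteq> {?s, ?t}"
    using set_subpath[OF P st(1,2)] st(3) Hpath_inter[OF HQ] by auto
  moreover have "{?s, ?t} \<subseteq> set (subpath P ?s ?t) \<inter> set (orient_along P Q)"
    using S is_path_orient_along[OF HQ] hd_orient_along[OF HQ] last_orient_along[OF HQ]
    by (auto simp: is_path_iff dest: hd_in_set last_in_set)
  ultimately show ?thesis
    using S is_path_orient_along[OF HQ] hd_orient_along[OF HQ] last_orient_along[OF HQ]
    unfolding internally_disjoint_paths_def by auto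
qed

lemma three_le_plen_ear:
  assumes P: "is_path V E P" and HQ: "is_Hpath V E (set P) (path_edges P) Q"
  shows "3 \<le> plen (subpath P (firstP P Q) (secondP P Q)) + plen Q"
proof (rule ccontr)
  let ?s = "firstP P Q" and ?t = "secondP P Q"
  note st = firstP_in_set[OF HQ] secondP_in_set[OF HQ] pos_firstP_less[OF HQ]
  assume "\<not> ?thesis"
  moreover have "2 \<le> length Q"
    using HQ by (simp add: is_Hpath_def)
  ultimately have "length Q = 2" and adj: "pos P ?t = Suc (pos P ?s)"
    using plen_subpath[OF P st(1,2)] st(3) by (auto simp: plen_def)
  then have "{hd Q, last Q} \<notin> path_edges P"
    using HQ by (simp add: is_Hpath_def)
  moreover have "{hd Q, last Q} = {P ! pos P ?s, P ! Suc (pos P ?s)}"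
    using pos_less_length_nth_pos[OF st(1)] pos_less_length_nth_pos[OF st(2)] adj
    by (auto simp: firstP_def secondP_def)
  moreover have "Suc (pos P ?s) < length P"
    using pos_less_length_nth_pos(1)[OF st(2)] adj by simp
  ultimately show False
    unfolding path_edges_def by blast
qed

text \<open>The cycle \<open>u\<^sub>QPv\<^sub>Q \<union> Q\<close>, listed from \<open>v\<^sub>Q\<close> backwards along \<open>P\<close>, so that its
  second vertex is the predecessor of \<open>v\<^sub>Q\<close> on \<open>P\<close>.\<close>
definition ear_cycle :: "'a list \<Rightarrow> 'a list \<Rightarrow> 'a list" where
  "ear_cycle P Q =
     join_cycle (rev (subpath P (firstP P Q) (secondP P Q))) (rev (orient_along P Q))"

lemma
  assumes P: "is_path V E P" and HQ: "is_Hpath V E (set P) (path_edges P) Q"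
  shows is_cycle_ear_cycle: "is_cycle V E (ear_cycle P Q)"
    and length_ear_cycle:
      "length (ear_cycle P Q) = pos P (secondP P Q) - pos P (firstP P Q) + plen Q"
    and hd_ear_cycle: "hd (ear_cycle P Q) = secondP P Q"
    and nth_one_ear_cycle: "ear_cycle P Q ! 1 = P ! (pos P (secondP P Q) - 1)"
    and set_ear_cycle: "set (ear_cycle P Q) = set (subpath P (firstP P Q) (secondP P Q)) \<union> set Q"
    and cycle_edges_ear_cycle: "cycle_edges (ear_cycle P Q) \<subseteq> path_edges P \<union> path_edges Q"
proof -
  let ?s = "firstP P Q" and ?t = "secondP P Q"
  note st = firstP_in_set[OF HQ] secondP_in_set[OF HQ] pos_firstP_less[OF HQ]
  have ear: "internally_disjoint_paths V E ?t ?s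
      (rev (subpath P ?s ?t)) (rev (orient_along P Q))" and "?t \<noteq> ?s"
    using internally_disjoint_paths_rev[OF internally_disjoint_paths_ear[OF P HQ]] st(3) by auto
  show "is_cycle V E (ear_cycle P Q)"
    unfolding ear_cycle_def
    using is_cycle_join_cycle[OF ear \<open>?t \<noteq> ?s\<close>] three_le_plen_ear[OF P HQ]
    by (simp add: plen_def)
  show "length (ear_cycle P Q) = pos P ?t - pos P ?s + plen Q"
    using plen_subpath[OF P st(1,2) less_imp_le[OF st(3)]] by (simp add: ear_cycle_def plen_def)
  show "hd (ear_cycle P Q) = ?t"
    unfolding ear_cycle_def by (rule hd_join_cycle[OF ear \<open>?t \<noteq> ?s\<close>])
  show "ear_cycle P Q ! 1 = P ! (pos P ?t - 1)"
    unfolding ear_cycle_def nth_one_join_cycle[OF ear \<open>?t \<noteq> ?s\<close>]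
    by (rule nth_one_rev_subpath[OF st(2,3)])
  show "set (ear_cycle P Q) = set (subpath P ?s ?t) \<union> set Q"
    unfolding ear_cycle_def set_join_cycle[OF ear \<open>?t \<noteq> ?s\<close>] by simp
  show "cycle_edges (ear_cycle P Q) \<subseteq> path_edges P \<union> path_edges Q"
    unfolding ear_cycle_def
    using cycle_edges_join_cycle[OF ear \<open>?t \<noteq> ?s\<close>] path_edges_subpath[OF P st(1,2)] st(3)
    by auto
qed

lemma pos_nth_pred:
  assumes "distinct P" "y \<in> set P"
  shows "P ! (pos P y - 1) \<in> set P" "pos P (P ! (pos P y - 1)) = pos P y - 1"
  using pos_less_length_nth_pos(1)[OF assms(2)] pos_nth[OF assms(1), of "pos P y - 1"] by auto

lemma mem_ear_cycle_iff:
  assumes P: "is_path V E P" and HQ: "is_Hpath V E (set P) (path_edges P) Q" and "z \<in> set P"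
  shows "z \<in> set (ear_cycle P Q) \<longleftrightarrow>
    pos P (firstP P Q) \<le> pos P z \<and> pos P z \<le> pos P (secondP P Q)"
  using assms set_ear_cycle[OF P HQ] Hpath_inter[OF HQ] pos_firstP_less[OF HQ]
    set_subpath[OF P firstP_in_set[OF HQ] secondP_in_set[OF HQ]]
  by auto

lemma short_ear_cycle:
  assumes P: "is_path V E P" and HQ: "is_Hpath V E (set P) (path_edges P) Q"
    and short: "pos P (secondP P Q) - pos P (firstP P Q) + plen Q < l"
  shows "is_cycle V E (ear_cycle P Q) \<and> length (ear_cycle P Q) < l \<and>
    set (ear_cycle P Q) \<subseteq> set P \<union> set Q \<and> cycle_edges (ear_cycle P Q) \<subseteq> path_edges P \<union> path_edges Q"
  using is_cycle_ear_cycle[OF P HQ] length_ear_cycle[OF P HQ] short set_ear_cycle[OF P HQ]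
    set_subpath[OF P firstP_in_set[OF HQ] secondP_in_set[OF HQ]] pos_firstP_less[OF HQ]
    cycle_edges_ear_cycle[OF P HQ]
  by auto

lemma short_cycle_through_ear:
  assumes P: "is_path V E P" and HQ: "is_Hpath V E (set P) (path_edges P) Q"
    and short: "pos P (secondP P Q) - pos P (firstP P Q) + plen Q < l"
  shows "short_cycle_through V E l (set P \<union> set Q) (path_edges P \<union> path_edges Q)
    (firstP P Q) (hd (ear_cycle P Q)) (ear_cycle P Q ! 1)"
proof -
  let ?s = "firstP P Q" and ?t = "secondP P Q"
  note st = firstP_in_set[OF HQ] secondP_in_set[OF HQ] pos_firstP_less[OF HQ]
  have "distinct P"
    using P by (simp add: is_path_iff)
  then have "P ! (pos P ?t - 1) \<in> set (subpath P ?s ?t)"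
    using set_subpath[OF P st(1,2)] pos_nth_pred[OF _ st(2)] st(3) by auto
  moreover have "set (subpath P ?s ?t) \<subseteq> set P"
    using set_subpath[OF P st(1,2)] st(3) by auto
  moreover have "plen (subpath P ?s ?t) = pos P ?t - pos P ?s"
    using plen_subpath[OF P st(1,2)] st(3) by simp
  ultimately have "internally_disjoint_paths V E ?s ?t (subpath P ?s ?t) (orient_along P Q) \<and>
      P ! (pos P ?t - 1) \<in> set (subpath P ?s ?t) \<union> set (orient_along P Q) \<and>
      plen (subpath P ?s ?t) + plen (orient_along P Q) < l \<and>
      set (subpath P ?s ?t) \<union> set (orient_along P Q) \<subseteq> set P \<union> set Q \<and>
      path_edges (subpath P ?s ?t) \<union> path_edges (orient_along P Q) \<subseteq> path_edges P \<union> path_edges Q"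
    using internally_disjoint_paths_ear[OF P HQ] short path_edges_subpath[OF P st(1,2)] st(3)
    by (auto simp: plen_def)
  then show ?thesis
    unfolding short_cycle_through_def hd_ear_cycle[OF P HQ] nth_one_ear_cycle[OF P HQ] by blast
qed

lemma ear_cycles_linked:
  assumes P: "is_path V E P"
    and HQ: "is_Hpath V E (set P) (path_edges P) Q" and HQ': "is_Hpath V E (set P) (path_edges P) Q'"
    and order: "lessP P (firstP P Q) (firstP P Q')" "lessP P (firstP P Q') (secondP P Q)"
      "lessP P (secondP P Q) (secondP P Q')"
  shows "hd P \<notin> set (ear_cycle P Q')"
    and "hd (ear_cycle P Q) \<in> set (ear_cycle P Q')"
    and "ear_cycle P Q ! 1 \<in> set (ear_cycle P Q')"
proof -
  have "distinct P" "P \<noteq> []"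
    using P by (auto simp: is_path_iff)
  then have "pos P (hd P) = 0"
    using pos_nth[of P 0] by (simp add: hd_conv_nth)
  then show "hd P \<notin> set (ear_cycle P Q')"
    using mem_ear_cycle_iff[OF P HQ' hd_in_set[OF \<open>P \<noteq> []\<close>]] order(1) by (simp add: lessP_def)
  show "hd (ear_cycle P Q) \<in> set (ear_cycle P Q')"
    using mem_ear_cycle_iff[OF P HQ' secondP_in_set[OF HQ]] order(2,3)
    by (simp add: hd_ear_cycle[OF P HQ] lessP_def)
  show "ear_cycle P Q ! 1 \<in> set (ear_cycle P Q')"
    unfolding nth_one_ear_cycle[OF P HQ]
    using mem_ear_cycle_iff[OF P HQ'] pos_nth_pred[OF \<open>distinct P\<close> secondP_in_set[OF HQ]] order(2,3)
    by (auto simp: lessP_def)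
qed

lemma short_cycle_through_ear_chain:
  fixes Q :: "nat \<Rightarrow> 'a list"
  assumes long: "\<forall>C. is_cycle V E C \<and> l \<le> length C \<longrightarrow> 2 * l \<le> length C"
    and P: "is_path V E P" and "1 \<le> r"
    and Hpaths: "\<forall>i\<in>{1..r}. is_Hpath V E (set P) (path_edges P) (Q i)"
    and short: "\<forall>i\<in>{1..r}. pos P (secondP P (Q i)) - pos P (firstP P (Q i)) + plen (Q i) < l"
    and start: "firstP P (Q 1) = hd P"
    and order: "\<forall>i\<in>{1..r-1}.
       lessP P (firstP P (Q i)) (firstP P (Q (i+1))) \<and>
       lessP P (firstP P (Q (i+1))) (secondP P (Q i)) \<and>
       lessP P (secondP P (Q i)) (secondP P (Q (i+1)))"
  shows "short_cycle_through V E l (set P \<union> (\<Union>j\<in>{1..r}. set (Q j)))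
    (path_edges P \<union> (\<Union>j\<in>{1..r}. path_edges (Q j))) (hd P) (secondP P (Q r))
    (P ! (pos P (secondP P (Q r)) - 1))"
proof -
  have HQ: "is_Hpath V E (set P) (path_edges P) (Q k)" if "k \<in> {1..r}" for k
    using Hpaths that by blast
  define VH where "VH = set P \<union> (\<Union>j\<in>{1..r}. set (Q j))"
  define EH where "EH = path_edges P \<union> (\<Union>j\<in>{1..r}. path_edges (Q j))"
  define M where "M k = ear_cycle P (Q k)" for k
  have cycles: "is_cycle V E (M k) \<and> length (M k) < l \<and> set (M k) \<subseteq> VH \<and> cycle_edges (M k) \<subseteq> EH"
    if "k \<in> {1..r}" for k
    using short_ear_cycle[OF P HQ short[rule_format], OF that that] that
    unfolding M_def VH_def EH_def by blast
  have "1 \<in> {1..r}" "r \<in> {1..r}"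
    using \<open>1 \<le> r\<close> by simp_all
  then have base: "short_cycle_through V E l VH EH (hd P) (hd (M 1)) (M 1 ! 1)"
    unfolding M_def using short_cycle_through_ear[OF P HQ short[rule_format], of 1] start
    by (auto simp: VH_def EH_def elim!: short_cycle_through_mono)
  have links: "hd P \<notin> set (M (Suc k)) \<and> hd (M k) \<in> set (M (Suc k)) \<and> M k ! 1 \<in> set (M (Suc k))"
    if "k \<in> {1..<r}" for k
  proof -
    have k: "k \<in> {1..r}" "Suc k \<in> {1..r}" "k \<in> {1..r - 1}"
      using that by auto
    show ?thesis
      unfolding M_def
      using ear_cycles_linked[OF P HQ[OF k(1)] HQ[OF k(2)]] order[rule_format, OF k(3)] by simp
  qed
  show ?thesis
    using short_cycle_through_chain[where M = M, OF long base cycles links \<open>1 \<le> r\<close> order_refl]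
    unfolding M_def hd_ear_cycle[OF P HQ[OF \<open>r \<in> {1..r}\<close>]]
      nth_one_ear_cycle[OF P HQ[OF \<open>r \<in> {1..r}\<close>]] VH_def EH_def .
qed

theorem lemma4:
  fixes V :: "'a set" and E :: "'a set set" and P :: "'a list" and Q :: "nat \<Rightarrow> 'a list"
    and l r :: nat and u v :: 'a
  assumes "0 < l"
    and "graph V E"
    and "is_path V E P" and "hd P = u" and "last P = v"
    and "1 \<le> r"
    and Qpaths: "\<forall>i\<in>{1..r}. is_Hpath V E (set P) (path_edges P) (Q i)"
    and E1': "\<forall>i\<in>{1..r}. \<forall>j\<in>{1..r}. (i + 1 < j \<or> j + 1 < i) \<longrightarrow> int_disjoint (Q i) (Q j)"
    and E2: "\<forall>i\<in>{1..r}.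
       (pos P (secondP P (Q i)) - pos P (firstP P (Q i))) + plen (Q i) < l"
    and E3: "firstP P (Q 1) = u" "secondP P (Q r) = v"
    and E4: "\<forall>i\<in>{1..r-1}.
       lessP P (firstP P (Q i)) (firstP P (Q (i+1))) \<and>
       lessP P (firstP P (Q (i+1))) (secondP P (Q i)) \<and>
       lessP P (secondP P (Q i)) (secondP P (Q (i+1)))"
    and long: "\<forall>C. is_cycle V E C \<and> l \<le> length C \<longrightarrow> 2 * l \<le> length C"
  shows "\<exists>R. is_path V E R \<and> hd R = u \<and> last R = v \<and> plen R < l \<and>
     set R \<subseteq> set P \<union> (\<Union>j\<in>{1..r}. set (Q j)) \<and>
     path_edges R \<subseteq> path_edges P \<union> (\<Union>j\<in>{1..r}. path_edges (Q j))"
proof -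
  have "short_cycle_through V E l (set P \<union> (\<Union>j\<in>{1..r}. set (Q j)))
      (path_edges P \<union> (\<Union>j\<in>{1..r}. path_edges (Q j))) u v (P ! (pos P v - 1))"
    using short_cycle_through_ear_chain[OF long \<open>is_path V E P\<close> \<open>1 \<le> r\<close> Qpaths E2 _ E4]
      E3 \<open>hd P = u\<close> by simp
  then obtain A B where "internally_disjoint_paths V E u v A B" "plen A + plen B < l"
    "set A \<union> set B \<subseteq> set P \<union> (\<Union>j\<in>{1..r}. set (Q j))"
    "path_edges A \<union> path_edges B \<subseteq> path_edges P \<union> (\<Union>j\<in>{1..r}. path_edges (Q j))"
    unfolding short_cycle_through_def by blast
  then show ?thesis
    unfolding internally_disjoint_paths_def by (intro exI[of _ A]) auto
qed

end
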